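(* The algebra $D(W)$ is not commutative.
   Context: Fix real $\alpha,\beta,v$ with $\alpha>-1$, $\beta>-1$, $|\alpha-\beta|<|v|<\alpha+\beta+2$; $\kappa_{\pm v,\pm\beta}=\alpha\pm v\pm\beta$. Let $W(t)=t^\alpha(1-t)^\beta\widetilde W(t)$ on $(0,1)$ with $$\widetilde W(t)=\begin{pmatrix}\frac{v(\kappa_{v,\beta}+2)}{\kappa_{v,-\beta}}t^2-(\kappa_{v,\beta}+2)t+(\alpha+1) & (\alpha+\beta+2)t-(\alpha+1)\\ (\alpha+\beta+2)t-(\alpha+1) & -\frac{v(\kappa_{-v,\beta}+2)}{\kappa_{-v,-\beta}}t^2-(\kappa_{-v,\beta}+2)t+(\alpha+1)\end{pmatrix},$$ and $(P_n^{(\alpha,\beta,v)})$ the monic orthogonal $2\times2$ matrix polynomials for $\int_0^1PWQ^*dt$. $D(W)$ is the algebra (under composition) of right-acting differential operators $D=\sum_i\frac{d^i}{dt^i}F_i$ ($F_i$ $2\times2$ matrix polynomials, $PD=\sum_iP^{(i)}F_i$) such that for every $n\ge0$ there is a constant matrix $\Lambda_n(D)$ with $P_n^{(\alpha,\beta,v)}D=\Lambda_n(D)P_n^{(\alpha,\beta,v)}$. *)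

theory Defs
  imports "HOL-Analysis.Analysis" "HOL-Computational_Algebra.Polynomial"
begin

text \<open>2x2 matrix polynomials are represented as 2x2 matrices with real polynomial entries.
  Index 1 is the first row/column, index 2 the second.\<close>

type_synonym mpoly2 = "real poly ^ 2 ^ 2"

definition meval :: "mpoly2 \<Rightarrow> real \<Rightarrow> real ^ 2 ^ 2" where
  "meval P t = (\<chi> i j. poly (P $ i $ j) t)"

definition mderiv :: "mpoly2 \<Rightarrow> mpoly2" where
  "mderiv P = (\<chi> i j. pderiv (P $ i $ j))"

definition mcoeff :: "mpoly2 \<Rightarrow> nat \<Rightarrow> real ^ 2 ^ 2" where
  "mcoeff P k = (\<chi> i j. coeff (P $ i $ j) k)"

definition mdeg_le :: "mpoly2 \<Rightarrow> nat \<Rightarrow> bool" where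
  "mdeg_le P n \<longleftrightarrow> (\<forall>i j. degree (P $ i $ j) \<le> n)"

definition Wtil :: "real \<Rightarrow> real \<Rightarrow> real \<Rightarrow> real \<Rightarrow> real ^ 2 ^ 2" where
  "Wtil \<alpha> \<beta> v t = (\<chi> i j.
     if i = j then
       (if i = 1 then v * ((\<alpha> + v + \<beta>) + 2) / (\<alpha> + v - \<beta>) * t^2
                      - ((\<alpha> + v + \<beta>) + 2) * t + (\<alpha> + 1)
        else - v * ((\<alpha> - v + \<beta>) + 2) / (\<alpha> - v - \<beta>) * t^2
                      - ((\<alpha> - v + \<beta>) + 2) * t + (\<alpha> + 1))
     else (\<alpha> + \<beta> + 2) * t - (\<alpha> + 1))"

definition Wgt :: "real \<Rightarrow> real \<Rightarrow> real \<Rightarrow> real \<Rightarrow> real ^ 2 ^ 2" where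
  "Wgt \<alpha> \<beta> v t = (t powr \<alpha> * (1 - t) powr \<beta>) *\<^sub>R Wtil \<alpha> \<beta> v t"

definition mip :: "real \<Rightarrow> real \<Rightarrow> real \<Rightarrow> mpoly2 \<Rightarrow> mpoly2 \<Rightarrow> real ^ 2 ^ 2" where
  "mip \<alpha> \<beta> v P Q = integral {0..1}
     (\<lambda>t. meval P t ** Wgt \<alpha> \<beta> v t ** transpose (meval Q t))"

definition is_MOP :: "real \<Rightarrow> real \<Rightarrow> real \<Rightarrow> nat \<Rightarrow> mpoly2 \<Rightarrow> bool" where
  "is_MOP \<alpha> \<beta> v n P \<longleftrightarrow>
     mdeg_le P n \<and> mcoeff P n = mat 1 \<and>
     (\<forall>Q. (\<forall>i j. degree (Q $ i $ j) < n) \<longrightarrow> mip \<alpha> \<beta> v P Q = 0)"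

text \<open>A right-acting differential operator \<open>D = \<Sum>_i d^i/dt^i F_i\<close> is given by the list of
  its coefficients [F_0, F_1, ...]; it acts by \<open>P D = \<Sum>_i P^(i) F_i\<close>.\<close>

definition dact :: "mpoly2 list \<Rightarrow> mpoly2 \<Rightarrow> mpoly2" where
  "dact Fs P = (\<Sum>i<length Fs. (mderiv ^^ i) P ** (Fs ! i))"

definition DW :: "real \<Rightarrow> real \<Rightarrow> real \<Rightarrow> mpoly2 list set" where
  "DW \<alpha> \<beta> v = {Fs. \<forall>n P. is_MOP \<alpha> \<beta> v n P \<longrightarrow>
       (\<exists>\<Lambda> :: real ^ 2 ^ 2. dact Fs P = (\<chi> i j. [:\<Lambda> $ i $ j:]) ** P)}"

end

theory Submission
  imports Defs
begin

(* Let w(t) = t^alpha (1-t)^beta and S(t) = t(1-t). A second-order operator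
   D = d^2/dt^2 F2 + d/dt F1 + F0 with deg F_i <= i preserves degrees, so if it is symmetric
   for the inner product then P_n D - Lambda P_n (Lambda its leading coefficient) has degree < n
   and is orthogonal to itself, hence zero: D lies in D(W). Symmetry follows from the symmetry
   equations for W, which write (P D) W Q^* - P W (Q D)^* as S C' - sigma C; multiplied by w this
   is the exact derivative (S w C)', because (S w)' = - sigma w, so it integrates to 0. Two explicit
   solutions D1, D2 of the symmetry equations then fail to commute on the constant polynomial I. *)

section \<open>Integrals against the scalar Jacobi weight\<close>

definition beta_weight :: "real \<Rightarrow> real \<Rightarrow> real \<Rightarrow> real" where
  "beta_weight \<alpha> \<beta> t = t powr \<alpha> * (1 - t) powr \<beta>"

definition beta_integral :: "real \<Rightarrow> real \<Rightarrow> real poly \<Rightarrow> real" where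
  "beta_integral \<alpha> \<beta> p = integral {0..1} (\<lambda>t. poly p t * beta_weight \<alpha> \<beta> t)"

lemma has_integral_power_beta_weight:
  assumes "\<alpha> > -1" "\<beta> > -1"
  shows "((\<lambda>t. t ^ k * beta_weight \<alpha> \<beta> t) has_integral Beta (\<alpha> + real k + 1) (\<beta> + 1)) {0..1}"
proof -
  have "((\<lambda>t. t powr (\<alpha> + real k + 1 - 1) * (1 - t) powr (\<beta> + 1 - 1)) has_integral
         Beta (\<alpha> + real k + 1) (\<beta> + 1)) {0..1}"
    by (rule has_integral_Beta_real) (use assms in auto)
  moreover have "t powr (\<alpha> + real k + 1 - 1) * (1 - t) powr (\<beta> + 1 - 1) = t ^ k * beta_weight \<alpha> \<beta> t"
    if "t \<in> {0..1}" for t :: real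
  proof (cases "t = 0")
    case False
    with that have "t powr (\<alpha> + real k) = t ^ k * t powr \<alpha>"
      by (simp add: powr_add powr_realpow mult.commute)
    then show ?thesis by (simp add: beta_weight_def)
  qed (simp add: beta_weight_def)
  ultimately show ?thesis by (rule has_integral_eq[rotated]) simp
qed

lemma integrable_poly_beta_weight:
  assumes "\<alpha> > -1" "\<beta> > -1"
  shows "(\<lambda>t. poly p t * beta_weight \<alpha> \<beta> t) integrable_on {0..1}"
proof -
  have "(\<lambda>t. \<Sum>k\<le>degree p. coeff p k * (t ^ k * beta_weight \<alpha> \<beta> t)) integrable_on {0..1}"
    by (auto intro!: integrable_sum integrable_on_mult_right
        has_integral_integrable[OF has_integral_power_beta_weight[OF assms]])
  then show ?thesis by (simp add: poly_altdef sum_distrib_right mult.assoc)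
qed

lemma beta_integral_add:
  assumes "\<alpha> > -1" "\<beta> > -1"
  shows "beta_integral \<alpha> \<beta> (p + q) = beta_integral \<alpha> \<beta> p + beta_integral \<alpha> \<beta> q"
  unfolding beta_integral_def
  by (simp add: distrib_right integral_add integrable_poly_beta_weight[OF assms])

lemma beta_integral_smult:
  "beta_integral \<alpha> \<beta> (smult c p) = c * beta_integral \<alpha> \<beta> p"
  by (simp add: beta_integral_def mult.assoc)

lemma beta_integral_diff:
  assumes "\<alpha> > -1" "\<beta> > -1"
  shows "beta_integral \<alpha> \<beta> (p - q) = beta_integral \<alpha> \<beta> p - beta_integral \<alpha> \<beta> q"
  using beta_integral_add[OF assms, of p "- q"] beta_integral_smult[of \<alpha> \<beta> "-1" q] by simp

lemma beta_integral_sum: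
  assumes "\<alpha> > -1" "\<beta> > -1"
  shows "beta_integral \<alpha> \<beta> (\<Sum>i\<in>I. f i) = (\<Sum>i\<in>I. beta_integral \<alpha> \<beta> (f i))"
proof (induction I rule: infinite_finite_induct)
  case (insert x F)
  then show ?case by (simp add: beta_integral_add[OF assms])
qed (simp_all add: beta_integral_def)

lemma beta_integral_monom:
  assumes "\<alpha> > -1" "\<beta> > -1"
  shows "beta_integral \<alpha> \<beta> (monom c k) = c * Beta (\<alpha> + real k + 1) (\<beta> + 1)"
  using integral_unique[OF has_integral_power_beta_weight[OF assms, of k]]
  by (simp add: beta_integral_def poly_monom mult.assoc)

(* (S w)' = - sigma w for S = t (1 - t) and w = beta_weight alpha beta *)
definition pearson_S :: "real poly" where
  "pearson_S = [:0, 1, -1:]"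

definition pearson_sigma :: "real \<Rightarrow> real \<Rightarrow> real poly" where
  "pearson_sigma \<alpha> \<beta> = [:- (\<alpha> + 1), \<alpha> + \<beta> + 2:]"

lemma pderiv_sum: "pderiv (\<Sum>x\<in>A. f x) = (\<Sum>x\<in>A. pderiv (f x))"
  using higher_pderiv_sum[of 1 f A] by simp

lemma pearson_monom:
  "pearson_S * pderiv (monom a k) - pearson_sigma \<alpha> \<beta> * monom a k
     = monom (a * (real k + \<alpha> + 1)) k - monom (a * (real k + \<alpha> + \<beta> + 2)) (Suc k)"
  by (rule poly_ext, cases k)
     (simp_all add: pearson_S_def pearson_sigma_def pderiv_monom poly_monom algebra_simps)

lemma beta_integral_pearson:
  assumes "\<alpha> > -1" "\<beta> > -1"
  shows "beta_integral \<alpha> \<beta> (pearson_S * pderiv c - pearson_sigma \<alpha> \<beta> * c) = 0"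
proof -
  let ?\<Phi> = "\<lambda>p. pearson_S * pderiv p - pearson_sigma \<alpha> \<beta> * p"
  have monom_case: "beta_integral \<alpha> \<beta> (?\<Phi> (monom a k)) = 0" for a k
  proof -
    have "\<alpha> + real k + 1 \<notin> \<int>\<^sub>\<le>\<^sub>0" using assms by (auto elim!: nonpos_Ints_cases)
    from Beta_plus1_left[OF this, of "\<beta> + 1"]
    have "(\<alpha> + real k + 1) * Beta (\<alpha> + real k + 1) (\<beta> + 1)
        - (\<alpha> + real k + 1 + (\<beta> + 1)) * Beta (\<alpha> + real k + 1 + 1) (\<beta> + 1) = 0"
      by simp
    moreover have "beta_integral \<alpha> \<beta> (?\<Phi> (monom a k)) = a * ((\<alpha> + real k + 1) * Beta (\<alpha> + real k + 1) (\<beta> + 1)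
        - (\<alpha> + real k + 1 + (\<beta> + 1)) * Beta (\<alpha> + real k + 1 + 1) (\<beta> + 1))"
      unfolding pearson_monom
      by (simp add: beta_integral_diff[OF assms] beta_integral_monom[OF assms] algebra_simps)
    ultimately show ?thesis by simp
  qed
  have "?\<Phi> c = (\<Sum>k\<le>degree c. ?\<Phi> (monom (coeff c k) k))"
    by (subst (1 2) poly_as_sum_of_monoms[symmetric])
       (simp add: pderiv_sum sum_distrib_left sum_subtractf)
  then show ?thesis by (simp add: beta_integral_sum[OF assms] monom_case)
qed

lemma has_integral_0_nonneg_imp_0:
  fixes f :: "real \<Rightarrow> real"
  assumes int_0: "(f has_integral 0) {a..b}" and nonneg: "\<And>t. t \<in> {a..b} \<Longrightarrow> f t \<ge> 0"
    and sub: "a \<le> c" "c < d" "d \<le> b" and cont: "continuous_on {c..d} f" and t: "t \<in> {c..d}"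
  shows "f t = 0"
proof -
  have int_ab: "f integrable_on {a..b}"
    using int_0 by (rule has_integral_integrable)
  have int_cd: "f integrable_on {c..d}"
    by (rule integrable_subinterval_real[OF int_ab]) (use sub in auto)
  have "integral {c..d} f \<le> integral {a..b} f"
    by (rule integral_subset_le[OF _ int_cd int_ab]) (use sub nonneg in auto)
  moreover have "integral {c..d} f \<ge> 0"
    by (rule integral_nonneg[OF int_cd]) (use sub nonneg in auto)
  moreover have "integral {a..b} f = 0"
    using int_0 by (rule integral_unique)
  ultimately have "(f has_integral 0) (cbox c d)"
    using int_cd by (simp add: has_integral_integral)
  moreover have "0 \<le> f x" if "x \<in> box c d" for x
    using that sub nonneg by auto
  ultimately show ?thesis
    using cont t sub by (intro has_integral_0_cbox_imp_0[of c d f]) simp_all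
qed

section \<open>Matrix polynomials\<close>

lemma matrix_add_rdistrib: "(B + C) ** A = B ** A + C ** A"
  by (vector matrix_matrix_mult_def sum.distrib[symmetric] field_simps)

lemma matrix_diff_ldistrib: "A ** (B - C) = A ** B - A ** (C :: 'a::ring_1^_^_)"
  by (vector matrix_matrix_mult_def sum_subtractf[symmetric] field_simps)

lemma matrix_diff_rdistrib: "(B - C) ** A = B ** A - C ** (A :: 'a::ring_1^_^_)"
  by (vector matrix_matrix_mult_def sum_subtractf[symmetric] field_simps)

lemma matrix_minus_left: "(- B) ** A = - (B ** (A :: 'a::ring_1^_^_))"
  by (vector matrix_matrix_mult_def sum_negf[symmetric])

lemma matrix_minus_right: "A ** (- B) = - (A ** (B :: 'a::ring_1^_^_))"
  by (vector matrix_matrix_mult_def sum_negf[symmetric])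

lemma transpose_add: "transpose (X + Y) = transpose X + transpose (Y :: 'a::semiring_1^_^_)"
  by (simp add: transpose_def vec_eq_iff)

lemma quadratic_form_diag:
  fixes M N :: "real^'n^'n"
  shows "(M ** N ** transpose M) $ i $ i = M $ i \<bullet> (N *v M $ i)"
  by (simp add: matrix_matrix_mult_def matrix_vector_mult_def inner_vec_def transpose_def
      sum_distrib_left sum_distrib_right mult_ac) (subst sum.swap, simp add: mult_ac)

lemma has_integral_matrix_entries:
  fixes f :: "real \<Rightarrow> real^'n^'m"
  assumes "\<And>i j. ((\<lambda>t. f t $ i $ j) has_integral I $ i $ j) S"
  shows "(f has_integral I) S"
proof -
  define E :: "'m \<Rightarrow> 'n \<Rightarrow> real^'n^'m"
    where "E i j = (\<chi> k l. if l = j then if k = i then 1 else 0 else 0)" for i j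
  have decomp: "M = (\<Sum>i\<in>UNIV. \<Sum>j\<in>UNIV. M $ i $ j *\<^sub>R E i j)" for M :: "real^'n^'m"
    by (simp add: vec_eq_iff E_def sum_component if_distrib[of "\<lambda>x. _ * x"] sum.delta'
        cong: if_cong)
  have "((\<lambda>t. \<Sum>i\<in>UNIV. \<Sum>j\<in>UNIV. f t $ i $ j *\<^sub>R E i j) has_integral
        (\<Sum>i\<in>UNIV. \<Sum>j\<in>UNIV. I $ i $ j *\<^sub>R E i j)) S"
    by (intro has_integral_sum has_integral_scaleR_left assms) auto
  then show ?thesis by (simp flip: decomp)
qed

definition mscale :: "'a::comm_ring_1 \<Rightarrow> 'a^'n^'m \<Rightarrow> 'a^'n^'m" where
  "mscale s X = (\<chi> i j. s * X $ i $ j)"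

lemma mscale_mult_left: "mscale s X ** Y = mscale s (X ** Y)"
  by (simp add: mscale_def matrix_matrix_mult_def vec_eq_iff sum_distrib_left mult.assoc)

lemma mscale_mult_right: "X ** mscale s Y = mscale s (X ** Y)"
  by (simp add: mscale_def matrix_matrix_mult_def vec_eq_iff sum_distrib_left mult_ac)

lemma mscale_add: "mscale s (X + Y) = mscale s X + mscale s Y"
  by (simp add: mscale_def vec_eq_iff distrib_left)

lemma mscale_diff: "mscale s (X - Y) = mscale s X - mscale s Y"
  by (simp add: mscale_def vec_eq_iff right_diff_distrib)

definition mconst :: "real^2^2 \<Rightarrow> mpoly2" where
  "mconst M = (\<chi> i j. [:M $ i $ j:])"

lemma meval_mult: "meval (X ** Y) t = meval X t ** meval Y t"
  by (simp add: meval_def matrix_matrix_mult_def vec_eq_iff poly_sum)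

lemma meval_transpose: "meval (transpose X) t = transpose (meval X t)"
  by (simp add: meval_def transpose_def vec_eq_iff)

lemma mderiv_add: "mderiv (X + Y) = mderiv X + mderiv Y"
  by (simp add: mderiv_def vec_eq_iff pderiv_add)

lemma mderiv_diff: "mderiv (X - Y) = mderiv X - mderiv Y"
  by (simp add: mderiv_def vec_eq_iff pderiv_diff)

lemma mderiv_mult: "mderiv (X ** Y) = mderiv X ** Y + X ** mderiv Y"
  by (simp add: mderiv_def matrix_matrix_mult_def vec_eq_iff pderiv_sum pderiv_mult
      sum.distrib[symmetric] algebra_simps)

lemma mderiv_transpose: "mderiv (transpose X) = transpose (mderiv X)"
  by (simp add: mderiv_def transpose_def vec_eq_iff)

definition mat2 :: "real poly \<Rightarrow> real poly \<Rightarrow> real poly \<Rightarrow> real poly \<Rightarrow> mpoly2" where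
  "mat2 a b c d = (\<chi> i j. if i = 1 then (if j = 1 then a else b) else (if j = 1 then c else d))"

lemma forall_2: "(\<forall>i::2. P i) \<longleftrightarrow> P 1 \<and> P 2"
  by (metis exhaust_2)

lemma mat2_nth [simp]:
  "mat2 a b c d $ 1 $ 1 = a" "mat2 a b c d $ 1 $ 2 = b"
  "mat2 a b c d $ 2 $ 1 = c" "mat2 a b c d $ 2 $ 2 = d"
  by (simp_all add: mat2_def)

lemma mat2_entries: "X = mat2 (X $ 1 $ 1) (X $ 1 $ 2) (X $ 2 $ 1) (X $ 2 $ 2)"
  unfolding mat2_def vec_eq_iff forall_2 by simp

lemma mat2_eq_iff: "mat2 a b c d = mat2 a' b' c' d' \<longleftrightarrow> a = a' \<and> b = b' \<and> c = c' \<and> d = d'"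
  unfolding mat2_def vec_eq_iff forall_2 by simp

lemma mat2_mult:
  "mat2 a b c d ** mat2 e f g h = mat2 (a*e + b*g) (a*f + b*h) (c*e + d*g) (c*f + d*h)"
  by (subst mat2_entries) (simp add: matrix_matrix_mult_def sum_2)

lemma mat2_transpose: "transpose (mat2 a b c d) = mat2 a c b d"
  by (subst mat2_entries) (simp add: transpose_def)

lemma mat2_add: "mat2 a b c d + mat2 e f g h = mat2 (a+e) (b+f) (c+g) (d+h)"
  by (subst mat2_entries) simp

lemma mat2_diff: "mat2 a b c d - mat2 e f g h = mat2 (a-e) (b-f) (c-g) (d-h)"
  by (subst mat2_entries) simp

lemma mat2_minus: "- mat2 a b c d = mat2 (-a) (-b) (-c) (-d)"
  by (subst mat2_entries) simp

lemma mat2_mscale: "mscale s (mat2 a b c d) = mat2 (s*a) (s*b) (s*c) (s*d)"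
  by (subst mat2_entries) (simp add: mscale_def)

lemma mat2_mderiv: "mderiv (mat2 a b c d) = mat2 (pderiv a) (pderiv b) (pderiv c) (pderiv d)"
  by (subst mat2_entries) (simp add: mderiv_def)

lemma mdeg_le_mat2:
  "mdeg_le (mat2 a b c d) n \<longleftrightarrow> degree a \<le> n \<and> degree b \<le> n \<and> degree c \<le> n \<and> degree d \<le> n"
  unfolding mdeg_le_def forall_2 by simp

lemmas mat2_arith = mat2_mult mat2_transpose mat2_add mat2_diff mat2_minus mat2_mscale
  mat2_mderiv mat2_eq_iff

section \<open>Symmetric second-order operators\<close>

definition dop2 :: "mpoly2 \<Rightarrow> mpoly2 \<Rightarrow> mpoly2 \<Rightarrow> mpoly2 \<Rightarrow> mpoly2" where
  "dop2 F0 F1 F2 P = P ** F0 + mderiv P ** F1 + mderiv (mderiv P) ** F2"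

lemma dact_eq_dop2: "dact [F0, F1, F2] P = dop2 F0 F1 F2 P"
  by (simp add: dact_def dop2_def numeral_3_eq_3 lessThan_Suc)

lemma degree_higher_pderiv: "degree ((pderiv ^^ k) (p :: real poly)) = degree p - k"
  by (induction k) (simp_all add: degree_pderiv)

lemma higher_pderiv_eq_0: "degree (p :: real poly) < k \<Longrightarrow> (pderiv ^^ k) p = 0"
  by (simp add: poly_eq_iff coeff_higher_pderiv coeff_eq_0)

lemma degree_higher_pderiv_mult_le:
  fixes p f :: "real poly"
  assumes "degree p \<le> n" "degree f \<le> k"
  shows "degree ((pderiv ^^ k) p * f) \<le> n"
proof (cases "k \<le> degree p")
  case True
  have "degree ((pderiv ^^ k) p * f) \<le> degree ((pderiv ^^ k) p) + degree f"
    by (rule degree_mult_le)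
  also have "\<dots> \<le> (degree p - k) + k"
    using assms by (simp add: degree_higher_pderiv)
  finally show ?thesis using True assms by linarith
qed (simp add: higher_pderiv_eq_0)

lemma mdeg_le_dop2:
  assumes "mdeg_le F0 0" "mdeg_le F1 1" "mdeg_le F2 2" "mdeg_le P n"
  shows "mdeg_le (dop2 F0 F1 F2 P) n"
  unfolding mdeg_le_def
proof (intro allI)
  fix i j
  have deg: "degree (((pderiv ^^ k) (P $ i $ l)) * F $ l $ j) \<le> n" if "mdeg_le F k" for F k l
    using that assms(4) by (intro degree_higher_pderiv_mult_le) (auto simp: mdeg_le_def)
  have "degree ((P ** F0) $ i $ j) \<le> n"
    using deg[OF assms(1)] by (auto simp: matrix_matrix_mult_def intro!: degree_sum_le)
  moreover have "degree ((mderiv P ** F1) $ i $ j) \<le> n"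
    using deg[OF assms(2)] by (auto simp: matrix_matrix_mult_def mderiv_def intro!: degree_sum_le)
  moreover have "degree ((mderiv (mderiv P) ** F2) $ i $ j) \<le> n"
    using deg[OF assms(3)]
    by (auto simp: matrix_matrix_mult_def mderiv_def numeral_2_eq_2 intro!: degree_sum_le)
  ultimately show "degree (dop2 F0 F1 F2 P $ i $ j) \<le> n"
    unfolding dop2_def by (auto intro!: degree_add_le)
qed

(* The symmetry equations of Duran and Grunbaum for d^2/dt^2 F2 + d/dt F1 + F0, with auxiliary
   unknowns A and B *)
definition symmetry_equations ::
    "real poly \<Rightarrow> real poly \<Rightarrow> mpoly2 \<Rightarrow> mpoly2 \<Rightarrow> mpoly2 \<Rightarrow> mpoly2 \<Rightarrow> mpoly2 \<Rightarrow> mpoly2 \<Rightarrow> bool"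
  where "symmetry_equations S \<sigma> W F0 F1 F2 A B \<longleftrightarrow>
    F2 ** W = mscale S A \<and> W ** transpose F2 = mscale S A \<and>
    mscale S (mderiv A + B) - mscale \<sigma> A = F1 ** W \<and>
    mscale S (B - mderiv A) + mscale \<sigma> A = - (W ** transpose F1) \<and>
    mscale S (mderiv B) - mscale \<sigma> B = F0 ** W - W ** transpose F0"

lemma dop2_adjoint_defect:
  fixes P Q :: mpoly2
  assumes "symmetry_equations S \<sigma> W F0 F1 F2 A B"
  defines "C \<equiv> mderiv P ** A ** transpose Q - P ** A ** transpose (mderiv Q) + P ** B ** transpose Q"
  shows "dop2 F0 F1 F2 P ** W ** transpose Q - P ** W ** transpose (dop2 F0 F1 F2 Q)
         = mscale S (mderiv C) - mscale \<sigma> C"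
proof -
  note eqs = assms(1)[unfolded symmetry_equations_def]
  let ?P1 = "mderiv P" and ?P2 = "mderiv (mderiv P)"
  let ?Q1 = "mderiv Q" and ?Q2 = "mderiv (mderiv Q)"
  have "mscale S (mderiv C) - mscale \<sigma> C =
     ?P2 ** (mscale S A) ** transpose Q
     + ?P1 ** (mscale S (mderiv A + B) - mscale \<sigma> A) ** transpose Q
     + P ** (mscale S (mderiv B) - mscale \<sigma> B) ** transpose Q
     + P ** (mscale S (B - mderiv A) + mscale \<sigma> A) ** transpose ?Q1
     - P ** (mscale S A) ** transpose ?Q2"
    unfolding C_def
    by (simp add: mderiv_add mderiv_diff mderiv_mult mderiv_transpose mscale_add mscale_diff
        mscale_mult_left mscale_mult_right matrix_add_ldistrib matrix_add_rdistrib
        matrix_diff_ldistrib matrix_diff_rdistrib matrix_mul_assoc algebra_simps)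
  also have "\<dots> = ?P2 ** (F2 ** W) ** transpose Q + ?P1 ** (F1 ** W) ** transpose Q
     + P ** (F0 ** W - W ** transpose F0) ** transpose Q
     + P ** (- (W ** transpose F1)) ** transpose ?Q1
     - P ** (W ** transpose F2) ** transpose ?Q2"
    using eqs by simp
  also have "\<dots> = dop2 F0 F1 F2 P ** W ** transpose Q - P ** W ** transpose (dop2 F0 F1 F2 Q)"
    unfolding dop2_def
    by (simp add: transpose_add matrix_transpose_mul matrix_add_ldistrib matrix_add_rdistrib
        matrix_diff_ldistrib matrix_diff_rdistrib matrix_minus_left matrix_minus_right
        matrix_mul_assoc algebra_simps)
  finally show ?thesis by simp
qed

section \<open>The matrix inner product\<close>

definition Wpoly :: "real \<Rightarrow> real \<Rightarrow> real \<Rightarrow> mpoly2" where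
  "Wpoly \<alpha> \<beta> v = mat2
     [:\<alpha> + 1, - ((\<alpha> + v + \<beta>) + 2), v * ((\<alpha> + v + \<beta>) + 2) / (\<alpha> + v - \<beta>):]
     [:- (\<alpha> + 1), \<alpha> + \<beta> + 2:] [:- (\<alpha> + 1), \<alpha> + \<beta> + 2:]
     [:\<alpha> + 1, - ((\<alpha> - v + \<beta>) + 2), - v * ((\<alpha> - v + \<beta>) + 2) / (\<alpha> - v - \<beta>):]"

lemma meval_Wpoly: "meval (Wpoly \<alpha> \<beta> v) t = Wtil \<alpha> \<beta> v t"
  by (simp add: meval_def Wpoly_def Wtil_def vec_eq_iff forall_2 algebra_simps power2_eq_square)

definition beta_integral_mat :: "real \<Rightarrow> real \<Rightarrow> mpoly2 \<Rightarrow> real^2^2" where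
  "beta_integral_mat \<alpha> \<beta> X = (\<chi> i j. beta_integral \<alpha> \<beta> (X $ i $ j))"

lemma mip_eq_beta_integral_mat:
  assumes "\<alpha> > -1" "\<beta> > -1"
  shows "mip \<alpha> \<beta> v P Q = beta_integral_mat \<alpha> \<beta> (P ** Wpoly \<alpha> \<beta> v ** transpose Q)"
proof -
  let ?X = "P ** Wpoly \<alpha> \<beta> v ** transpose Q"
  have "meval P t ** Wgt \<alpha> \<beta> v t ** transpose (meval Q t) = beta_weight \<alpha> \<beta> t *\<^sub>R meval ?X t"
    for t
    by (simp add: Wgt_def beta_weight_def meval_mult meval_transpose meval_Wpoly
        matrix_scalar_ac scalar_matrix_assoc[symmetric])
  also have "\<dots> t = (\<chi> i j. poly (?X $ i $ j) t * beta_weight \<alpha> \<beta> t)" for t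
    by (simp add: meval_def vec_eq_iff mult.commute)
  finally have integrand: "meval P t ** Wgt \<alpha> \<beta> v t ** transpose (meval Q t)
      = (\<chi> i j. poly (?X $ i $ j) t * beta_weight \<alpha> \<beta> t)" for t .
  have "((\<lambda>t. \<chi> i j. poly (?X $ i $ j) t * beta_weight \<alpha> \<beta> t)
      has_integral beta_integral_mat \<alpha> \<beta> ?X) {0..1}"
    by (rule has_integral_matrix_entries)
       (simp add: beta_integral_mat_def beta_integral_def integrable_poly_beta_weight[OF assms]
        has_integral_integral[symmetric])
  then show ?thesis
    unfolding mip_def integrand by (rule integral_unique)
qed

lemma beta_integral_mat_diff:
  assumes "\<alpha> > -1" "\<beta> > -1"
  shows "beta_integral_mat \<alpha> \<beta> (X - Y) = beta_integral_mat \<alpha> \<beta> X - beta_integral_mat \<alpha> \<beta> Y"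
  by (simp add: beta_integral_mat_def vec_eq_iff beta_integral_diff[OF assms])

lemma beta_integral_mat_mconst:
  assumes "\<alpha> > -1" "\<beta> > -1"
  shows "beta_integral_mat \<alpha> \<beta> (mconst M ** X) = M ** beta_integral_mat \<alpha> \<beta> X"
  by (simp add: beta_integral_mat_def mconst_def vec_eq_iff matrix_matrix_mult_def
      beta_integral_sum[OF assms] beta_integral_smult)

lemma beta_integral_mat_pearson:
  assumes "\<alpha> > -1" "\<beta> > -1"
  shows "beta_integral_mat \<alpha> \<beta> (mscale pearson_S (mderiv C) - mscale (pearson_sigma \<alpha> \<beta>) C) = 0"
  by (simp add: beta_integral_mat_def vec_eq_iff mscale_def mderiv_def beta_integral_pearson[OF assms])

lemma mip_diff_left:
  assumes "\<alpha> > -1" "\<beta> > -1"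
  shows "mip \<alpha> \<beta> v (X - Y) Q = mip \<alpha> \<beta> v X Q - mip \<alpha> \<beta> v Y Q"
  by (simp add: mip_eq_beta_integral_mat[OF assms] matrix_diff_rdistrib beta_integral_mat_diff[OF assms])

lemma mip_mconst_left:
  assumes "\<alpha> > -1" "\<beta> > -1"
  shows "mip \<alpha> \<beta> v (mconst M ** X) Q = M ** mip \<alpha> \<beta> v X Q"
  by (simp add: mip_eq_beta_integral_mat[OF assms] matrix_mul_assoc[symmetric]
      beta_integral_mat_mconst[OF assms])

lemma mip_dop2_symmetric:
  assumes "\<alpha> > -1" "\<beta> > -1"
    and "symmetry_equations pearson_S (pearson_sigma \<alpha> \<beta>) (Wpoly \<alpha> \<beta> v) F0 F1 F2 A B"
  shows "mip \<alpha> \<beta> v (dop2 F0 F1 F2 P) Q = mip \<alpha> \<beta> v P (dop2 F0 F1 F2 Q)"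
proof -
  have "mip \<alpha> \<beta> v (dop2 F0 F1 F2 P) Q - mip \<alpha> \<beta> v P (dop2 F0 F1 F2 Q)
      = beta_integral_mat \<alpha> \<beta> (dop2 F0 F1 F2 P ** Wpoly \<alpha> \<beta> v ** transpose Q
          - P ** Wpoly \<alpha> \<beta> v ** transpose (dop2 F0 F1 F2 Q))"
    by (simp add: mip_eq_beta_integral_mat[OF assms(1,2)] beta_integral_mat_diff[OF assms(1,2)])
  also have "\<dots> = 0"
    by (simp add: dop2_adjoint_defect[OF assms(3)] beta_integral_mat_pearson[OF assms(1,2)])
  finally show ?thesis by simp
qed

lemma poly_eq_0_if_zero_on_interval:
  fixes p :: "real poly"
  assumes "a < b" "\<And>t. t \<in> {a..b} \<Longrightarrow> poly p t = 0"
  shows "p = 0"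
proof -
  have "{a..b} \<subseteq> {t. poly p t = 0}"
    using assms(2) by auto
  then have "infinite {t. poly p t = 0}"
    using assms(1) infinite_Icc finite_subset by blast
  then show ?thesis
    using poly_roots_finite by blast
qed

lemma mip_self_eq_0_imp_0:
  assumes "\<alpha> > -1" "\<beta> > -1"
    and pos_def: "\<And>t x. 0 < t \<Longrightarrow> t < 1 \<Longrightarrow> x \<noteq> 0 \<Longrightarrow> x \<bullet> (Wtil \<alpha> \<beta> v t *v x) > 0"
    and "mip \<alpha> \<beta> v R R = 0"
  shows "R = 0"
proof -
  have "R $ i $ j = 0" for i j
  proof -
    define p where "p = (R ** Wpoly \<alpha> \<beta> v ** transpose R) $ i $ i"
    define f where "f = (\<lambda>t. poly p t * beta_weight \<alpha> \<beta> t)"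
    have quad: "poly p t = meval R t $ i \<bullet> (Wtil \<alpha> \<beta> v t *v meval R t $ i)" for t
    proof -
      have "poly p t = meval (R ** Wpoly \<alpha> \<beta> v ** transpose R) t $ i $ i"
        by (simp add: p_def meval_def)
      also have "\<dots> = (meval R t ** Wtil \<alpha> \<beta> v t ** transpose (meval R t)) $ i $ i"
        by (simp add: meval_mult meval_transpose meval_Wpoly)
      finally show ?thesis by (simp add: quadratic_form_diag)
    qed
    have "beta_integral \<alpha> \<beta> p = 0"
      using assms(4) by (simp add: mip_eq_beta_integral_mat[OF assms(1,2)] beta_integral_mat_def
          vec_eq_iff p_def)
    then have "(f has_integral 0) {0..1}"
      using integrable_poly_beta_weight[OF assms(1,2), of p]
      by (simp add: f_def beta_integral_def has_integral_integral)
    moreover have "f t \<ge> 0" if "t \<in> {0..1}" for t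
    proof (cases "t = 0 \<or> t = 1")
      case False
      with that pos_def[of t "meval R t $ i"] show ?thesis
        by (cases "meval R t $ i = 0") (auto simp: f_def quad beta_weight_def)
    qed (auto simp: f_def beta_weight_def)
    moreover have "continuous_on {1/4..3/4} f" \<comment> \<open>w need not be continuous at 0 and 1\<close>
      unfolding f_def beta_weight_def by (intro continuous_intros) auto
    ultimately have "f t = 0" if "t \<in> {1/4..3/4}" for t
      using that by (intro has_integral_0_nonneg_imp_0[of f 0 1 "1/4" "3/4"]) auto
    then have "meval R t $ i = 0" if "t \<in> {1/4..3/4}" for t
      using that pos_def[of t "meval R t $ i"] by (force simp: f_def quad beta_weight_def)
    then show ?thesis
      by (intro poly_eq_0_if_zero_on_interval[of "1/4" "3/4"]) (auto simp: meval_def vec_eq_iff)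
  qed
  then show ?thesis by (simp add: vec_eq_iff)
qed

section \<open>Symmetric operators belong to D(W)\<close>

lemma coeff_mconst_mult:
  "coeff ((mconst M ** P) $ i $ j) k = (\<Sum>l\<in>UNIV. M $ i $ l * coeff (P $ l $ j) k)"
  by (simp add: mconst_def matrix_matrix_mult_def coeff_sum)

lemma coeff_sub_leading_term_monic:
  assumes "mdeg_le P n" "mcoeff P n = mat 1" "mdeg_le X n" "n \<le> k"
  shows "coeff ((X - mconst (mcoeff X n) ** P) $ i $ j) k = 0"
proof (cases "k = n")
  case True
  have "coeff (P $ l $ j) n = (mat 1 :: real^2^2) $ l $ j" for l
    using assms(2) by (simp add: mcoeff_def vec_eq_iff)
  then show ?thesis
    using True by (simp add: coeff_mconst_mult mcoeff_def mat_def sum_2) (metis exhaust_2)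
next
  case False
  with assms have "n < k" by simp
  with assms(1,3) have "coeff (X $ i $ j) k = 0" "coeff (P $ l $ j) k = 0" for l
    by (meson coeff_eq_0 le_less_trans mdeg_le_def)+
  then show ?thesis by (simp add: coeff_mconst_mult)
qed

lemma symmetric_operator_in_DW:
  assumes "\<alpha> > -1" "\<beta> > -1"
    and pos_def: "\<And>t x. 0 < t \<Longrightarrow> t < 1 \<Longrightarrow> x \<noteq> 0 \<Longrightarrow> x \<bullet> (Wtil \<alpha> \<beta> v t *v x) > 0"
    and sym: "symmetry_equations pearson_S (pearson_sigma \<alpha> \<beta>) (Wpoly \<alpha> \<beta> v) F0 F1 F2 A B"
    and "mdeg_le F0 0" "mdeg_le F1 1" "mdeg_le F2 2"
  shows "[F0, F1, F2] \<in> DW \<alpha> \<beta> v"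
  unfolding DW_def
proof (intro CollectI allI impI)
  fix n P assume "is_MOP \<alpha> \<beta> v n P"
  then have deg_P: "mdeg_le P n" and monic: "mcoeff P n = mat 1"
    and orth: "\<And>Q. \<forall>i j. degree (Q $ i $ j) < n \<Longrightarrow> mip \<alpha> \<beta> v P Q = 0"
    unfolding is_MOP_def by auto
  let ?D = "dop2 F0 F1 F2"
  have deg_D: "mdeg_le X m \<Longrightarrow> mdeg_le (?D X) m" for X m
    using assms(5-7) by (rule mdeg_le_dop2)
  define \<Lambda> where "\<Lambda> = mcoeff (?D P) n"
  define R where "R = ?D P - mconst \<Lambda> ** P"
  have coeff_R: "coeff (R $ i $ j) k = 0" if "n \<le> k" for i j k
    unfolding R_def \<Lambda>_def using deg_P monic deg_D[OF deg_P] that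
    by (rule coeff_sub_leading_term_monic)
  have "R = 0"
  proof (cases "n = 0")
    case True
    then show ?thesis using coeff_R by (simp add: vec_eq_iff poly_eq_iff)
  next
    case False
    have deg_R: "mdeg_le R (n - 1)"
      unfolding mdeg_le_def using coeff_R False by (auto intro!: degree_le)
    have low: "mdeg_le X (n - 1) \<Longrightarrow> \<forall>i j. degree (X $ i $ j) < n" for X
      using False unfolding mdeg_le_def by (meson diff_less le_less_trans not_gr_zero zero_less_one)
    have "mip \<alpha> \<beta> v R R = mip \<alpha> \<beta> v (?D P) R - \<Lambda> ** mip \<alpha> \<beta> v P R"
      unfolding R_def by (simp add: mip_diff_left[OF assms(1,2)] mip_mconst_left[OF assms(1,2)])
    also have "\<dots> = mip \<alpha> \<beta> v P (?D R) - \<Lambda> ** mip \<alpha> \<beta> v P R"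
      by (simp add: mip_dop2_symmetric[OF assms(1,2) sym])
    also have "\<dots> = 0"
      using orth[OF low[OF deg_R]] orth[OF low[OF deg_D[OF deg_R]]] by simp
    finally show ?thesis using mip_self_eq_0_imp_0[OF assms(1,2) pos_def] by blast
  qed
  then show "\<exists>\<Lambda>::real^2^2. dact [F0, F1, F2] P = (\<chi> i j. [:\<Lambda> $ i $ j:]) ** P"
    by (auto simp: R_def mconst_def dact_eq_dop2)
qed

section \<open>Positive definiteness of the weight\<close>

lemma pos_def_2x2:
  fixes M :: "real^2^2"
  assumes sym: "M $ 1 $ 2 = M $ 2 $ 1" and pos: "M $ 1 $ 1 > 0"
    and det: "M $ 1 $ 1 * M $ 2 $ 2 - (M $ 1 $ 2)\<^sup>2 > 0" and "x \<noteq> 0"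
  shows "x \<bullet> (M *v x) > 0"
proof -
  have "M $ 1 $ 1 * (x \<bullet> (M *v x))
      = (M $ 1 $ 1 * x $ 1 + M $ 1 $ 2 * x $ 2)\<^sup>2 + (M $ 1 $ 1 * M $ 2 $ 2 - (M $ 1 $ 2)\<^sup>2) * (x $ 2)\<^sup>2"
    by (simp add: inner_vec_def matrix_vector_mult_def sum_2 sym algebra_simps power2_eq_square)
  also have "\<dots> > 0"
  proof (cases "x $ 2 = 0")
    case True
    with \<open>x \<noteq> 0\<close> have "x $ 1 \<noteq> 0" by (metis exhaust_2 vec_eq_iff zero_index)
    with True pos show ?thesis by simp
  next
    case False
    with det show ?thesis by (simp add: add_nonneg_pos)
  qed
  finally show ?thesis using pos by (simp add: zero_less_mult_iff)
qed

lemma Wtil_det: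
  assumes "\<alpha> + v - \<beta> \<noteq> 0" "\<alpha> - v - \<beta> \<noteq> 0"
  shows "(Wtil \<alpha> \<beta> v t $ 1 $ 1 * Wtil \<alpha> \<beta> v t $ 2 $ 2 - (Wtil \<alpha> \<beta> v t $ 1 $ 2)\<^sup>2)
           * ((\<alpha> + v - \<beta>) * (\<alpha> - v - \<beta>))
         = - (v\<^sup>2 * (\<alpha> + v + \<beta> + 2) * (\<alpha> - v + \<beta> + 2) * t\<^sup>2 * (1 - t)\<^sup>2)"
proof -
  let ?W = "Wtil \<alpha> \<beta> v t"
  have w11: "?W $ 1 $ 1 * (\<alpha> + v - \<beta>)
      = v * (\<alpha> + v + \<beta> + 2) * t\<^sup>2 - (\<alpha> + v + \<beta> + 2) * (\<alpha> + v - \<beta>) * t + (\<alpha> + 1) * (\<alpha> + v - \<beta>)"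
    using assms(1) by (simp add: Wtil_def field_simps)
  have w22: "?W $ 2 $ 2 * (\<alpha> - v - \<beta>)
      = - v * (\<alpha> - v + \<beta> + 2) * t\<^sup>2 - (\<alpha> - v + \<beta> + 2) * (\<alpha> - v - \<beta>) * t + (\<alpha> + 1) * (\<alpha> - v - \<beta>)"
    using assms(2) by (simp add: Wtil_def field_simps)
  have w12: "?W $ 1 $ 2 = (\<alpha> + \<beta> + 2) * t - (\<alpha> + 1)"
    by (simp add: Wtil_def)
  have "(?W $ 1 $ 1 * ?W $ 2 $ 2 - (?W $ 1 $ 2)\<^sup>2) * ((\<alpha> + v - \<beta>) * (\<alpha> - v - \<beta>))
      = (?W $ 1 $ 1 * (\<alpha> + v - \<beta>)) * (?W $ 2 $ 2 * (\<alpha> - v - \<beta>))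
        - (?W $ 1 $ 2)\<^sup>2 * ((\<alpha> + v - \<beta>) * (\<alpha> - v - \<beta>))"
    by (simp add: algebra_simps)
  also have "\<dots> = - (v\<^sup>2 * (\<alpha> + v + \<beta> + 2) * (\<alpha> - v + \<beta> + 2) * t\<^sup>2 * (1 - t)\<^sup>2)"
    unfolding w11 w22 w12 by algebra
  finally show ?thesis .
qed

lemma parameter_bounds:
  fixes \<alpha> \<beta> v :: real
  assumes "\<bar>\<alpha> - \<beta>\<bar> < \<bar>v\<bar>" and "\<bar>v\<bar> < \<alpha> + \<beta> + 2"
  shows "v \<noteq> 0" "(\<alpha> + v - \<beta>) * (\<alpha> - v - \<beta>) < 0"
    "\<alpha> + v + \<beta> + 2 > 0" "\<alpha> - v + \<beta> + 2 > 0"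
proof -
  show "v \<noteq> 0" using assms(1) by auto
  have "\<bar>\<alpha> - \<beta>\<bar>\<^sup>2 < \<bar>v\<bar>\<^sup>2" using assms(1) by (intro power_strict_mono) auto
  then show "(\<alpha> + v - \<beta>) * (\<alpha> - v - \<beta>) < 0"
    by (simp add: algebra_simps power2_eq_square)
  show "\<alpha> + v + \<beta> + 2 > 0" "\<alpha> - v + \<beta> + 2 > 0"
    using assms(2) by (auto simp: abs_if split: if_splits)
qed

lemma Wtil_pos_def:
  assumes "\<alpha> > -1" "\<bar>\<alpha> - \<beta>\<bar> < \<bar>v\<bar>" "\<bar>v\<bar> < \<alpha> + \<beta> + 2"
    and t: "0 < t" "t < 1" and "x \<noteq> 0"
  shows "x \<bullet> (Wtil \<alpha> \<beta> v t *v x) > 0"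
proof -
  note bounds = parameter_bounds[OF assms(2,3)]
  let ?W = "\<lambda>s. Wtil \<alpha> \<beta> v s"
  have K: "\<alpha> + v - \<beta> \<noteq> 0" "\<alpha> - v - \<beta> \<noteq> 0"
    using bounds(2) by auto
  have det_pos: "?W s $ 1 $ 1 * ?W s $ 2 $ 2 - (?W s $ 1 $ 2)\<^sup>2 > 0" if "0 < s" "s < 1" for s
  proof -
    let ?d = "?W s $ 1 $ 1 * ?W s $ 2 $ 2 - (?W s $ 1 $ 2)\<^sup>2"
    have "v\<^sup>2 * (\<alpha> + v + \<beta> + 2) * (\<alpha> - v + \<beta> + 2) * s\<^sup>2 * (1 - s)\<^sup>2 > 0"
      using bounds that by simp
    then have "?d * ((\<alpha> + v - \<beta>) * (\<alpha> - v - \<beta>)) < 0"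
      unfolding Wtil_det[OF K] by linarith
    then show ?thesis
      using bounds(2) mult_nonpos_nonpos[of ?d "(\<alpha> + v - \<beta>) * (\<alpha> - v - \<beta>)"] by linarith
  qed
  have "?W t $ 1 $ 1 > 0"
  proof (rule ccontr)
    assume "\<not> ?W t $ 1 $ 1 > 0"
    moreover have "?W 0 $ 1 $ 1 > 0" using assms(1) by (simp add: Wtil_def)
    moreover have "continuous_on {0..t} (\<lambda>s. ?W s $ 1 $ 1)"
      unfolding Wtil_def by (simp, intro continuous_intros) (use K in auto)
    ultimately obtain s where s: "0 \<le> s" "s \<le> t" "?W s $ 1 $ 1 = 0"
      using IVT2'[of "\<lambda>s. ?W s $ 1 $ 1" t 0 0] t by auto
    with \<open>?W 0 $ 1 $ 1 > 0\<close> have "0 < s" "s < 1" using t by (auto simp: order.order_iff_strict)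
    from det_pos[OF this] s(3) show False by simp
  qed
  moreover have "?W t $ 1 $ 2 = ?W t $ 2 $ 1" by (simp add: Wtil_def)
  ultimately show ?thesis using pos_def_2x2 det_pos[OF t] assms(6) by blast
qed

section \<open>Two non-commuting operators\<close>

(* Naming the two quotients in Wpoly lets algebra check the symmetry equations as polynomial
   identities modulo the two relations defining c1 and c2. *)
lemma Wpoly_cases:
  assumes "\<alpha> + v - \<beta> \<noteq> 0" "\<alpha> - v - \<beta> \<noteq> 0"
  obtains c1 c2 where "c1 * (\<alpha> + v - \<beta>) = v * (\<alpha> + v + \<beta> + 2)"
    "c2 * (\<alpha> - v - \<beta>) = - v * (\<alpha> - v + \<beta> + 2)"
    "Wpoly \<alpha> \<beta> v = mat2 [:\<alpha> + 1, - (\<alpha> + v + \<beta> + 2), c1:]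
       [:- (\<alpha> + 1), \<alpha> + \<beta> + 2:] [:- (\<alpha> + 1), \<alpha> + \<beta> + 2:]
       [:\<alpha> + 1, - (\<alpha> - v + \<beta> + 2), c2:]"
  using assms
  by (intro that[of "v * (\<alpha> + v + \<beta> + 2) / (\<alpha> + v - \<beta>)" "- v * (\<alpha> - v + \<beta> + 2) / (\<alpha> - v - \<beta>)"])
     (simp_all add: Wpoly_def)

lemma zero_eq_pCons_iff: "0 = pCons a p \<longleftrightarrow> a = 0 \<and> p = 0"
  by (metis pCons_eq_0_iff)

lemmas pCons_arith = mult_pCons_left smult_pCons smult_0_right add_pCons diff_pCons minus_pCons
  pderiv_pCons pderiv_0 pCons_eq_iff pCons_eq_0_iff zero_eq_pCons_iff
  mult_zero_left mult_zero_right add_0_left add_0_right diff_0 diff_0_right minus_zero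
  pCons_0_0 simp_thms

definition D1F0 :: "real \<Rightarrow> mpoly2" where
  "D1F0 v = mat2 0 0 0 [:- v\<^sup>2:]"

definition D1F1 :: "real \<Rightarrow> real \<Rightarrow> real \<Rightarrow> mpoly2" where
  "D1F1 \<alpha> \<beta> v = mat2
     [:\<alpha> - \<beta> - (\<alpha> + 2) * v, (\<alpha> + \<beta> + 4) * v:] [:\<alpha> - \<beta> - v:]
     [:\<beta> - \<alpha> - v:] [:\<beta> - \<alpha> - (\<alpha> + 2) * v, (\<alpha> + \<beta> + 4) * v:]"

definition D1F2 :: "real \<Rightarrow> mpoly2" where
  "D1F2 v = mat2 [:0, - v, v:] 0 0 [:0, - v, v:]"

definition D1A :: "real \<Rightarrow> real \<Rightarrow> real \<Rightarrow> mpoly2" where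
  "D1A \<alpha> \<beta> v = mscale [:- v:] (Wpoly \<alpha> \<beta> v)"

definition D1B :: "real \<Rightarrow> mpoly2" where
  "D1B v = mat2 0 [:- v\<^sup>2:] [:v\<^sup>2:] 0"

lemma symmetry_equations_D1:
  assumes "\<alpha> + v - \<beta> \<noteq> 0" "\<alpha> - v - \<beta> \<noteq> 0"
  shows "symmetry_equations pearson_S (pearson_sigma \<alpha> \<beta>) (Wpoly \<alpha> \<beta> v)
           (D1F0 v) (D1F1 \<alpha> \<beta> v) (D1F2 v) (D1A \<alpha> \<beta> v) (D1B v)"
proof -
  obtain c1 c2 where c1: "c1 * (\<alpha> + v - \<beta>) = v * (\<alpha> + v + \<beta> + 2)"
    and c2: "c2 * (\<alpha> - v - \<beta>) = - v * (\<alpha> - v + \<beta> + 2)"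
    and W: "Wpoly \<alpha> \<beta> v = mat2 [:\<alpha> + 1, - (\<alpha> + v + \<beta> + 2), c1:]
       [:- (\<alpha> + 1), \<alpha> + \<beta> + 2:] [:- (\<alpha> + 1), \<alpha> + \<beta> + 2:]
       [:\<alpha> + 1, - (\<alpha> - v + \<beta> + 2), c2:]"
    using Wpoly_cases[OF assms] .
  show ?thesis
    unfolding symmetry_equations_def D1A_def W D1F0_def D1F1_def D1F2_def D1B_def
      pearson_S_def pearson_sigma_def mat2_arith
    apply (simp only: pCons_arith)
    apply (intro conjI)
    apply (algebra | use c1 c2 in algebra)+
    done
qed

(* k1, k2, k3, k4 stand for kappa_{v,-beta}, kappa_{-v,-beta}, kappa_{v,beta} + 2, kappa_{-v,beta} + 2 *)
definition D2F0 :: "real \<Rightarrow> real \<Rightarrow> real \<Rightarrow> mpoly2" where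
  "D2F0 \<alpha> \<beta> v = (let k1 = \<alpha> + v - \<beta>; k2 = \<alpha> - v - \<beta>; k3 = \<alpha> + v + \<beta> + 2; k4 = \<alpha> - v + \<beta> + 2 in
     mat2 0 [:v\<^sup>2 * k2 * k3 * k4 * (k4 + 2):] [:- v\<^sup>2 * k1 * k3 * k4 * (k3 + 2):] 0)"

definition D2F1 :: "real \<Rightarrow> real \<Rightarrow> real \<Rightarrow> mpoly2" where
  "D2F1 \<alpha> \<beta> v = (let k1 = \<alpha> + v - \<beta>; k2 = \<alpha> - v - \<beta>; k3 = \<alpha> + v + \<beta> + 2; k4 = \<alpha> - v + \<beta> + 2 in mat2
     [:- 4 * v * k1 * k2 * k3:]
     [:- 2 * v * k1 * k2 * k3 * (k4 + 2), 4 * v\<^sup>2 * k2 * k3 * (k4 + 2):]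
     [:- 2 * v * k1 * k2 * k4 * (k3 + 2), - 4 * v\<^sup>2 * k1 * k4 * (k3 + 2):]
     [:- 4 * v * k1 * k2 * k4:])"

definition D2F2 :: "real \<Rightarrow> real \<Rightarrow> real \<Rightarrow> mpoly2" where
  "D2F2 \<alpha> \<beta> v = (let k1 = \<alpha> + v - \<beta>; k2 = \<alpha> - v - \<beta>; k3 = \<alpha> + v + \<beta> + 2; k4 = \<alpha> - v + \<beta> + 2 in
     let g = 2 * k1 * k2 * (v\<^sup>2 + (\<alpha> - \<beta>) * (\<alpha> + \<beta> + 2)) in mat2
     [:g, - 4 * v\<^sup>2 * k1 * k2:]
     [:g, - 4 * v * k1 * k2 * k3, 4 * v\<^sup>2 * k2 * k3:]
     [:- g, - 4 * v * k1 * k2 * k4, - 4 * v\<^sup>2 * k1 * k4:]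
     [:- g, 4 * v\<^sup>2 * k1 * k2:])"

definition D2A :: "real \<Rightarrow> real \<Rightarrow> real \<Rightarrow> mpoly2" where
  "D2A \<alpha> \<beta> v = (let k1 = \<alpha> + v - \<beta>; k2 = \<alpha> - v - \<beta>; k3 = \<alpha> + v + \<beta> + 2; k4 = \<alpha> - v + \<beta> + 2 in
     let a = [:- 2 * v * k1 * k2 * k3 * k4, - 4 * v ^ 3 * k3 * k4, 4 * v ^ 3 * k3 * k4:] in mat2
     [:2 * v * k1 * k2 * k3 * k4, - 4 * v\<^sup>2 * k2 * k3 * k4:] a a
     [:2 * v * k1 * k2 * k3 * k4, 4 * v\<^sup>2 * k1 * k3 * k4:])"

definition D2B :: "real \<Rightarrow> real \<Rightarrow> real \<Rightarrow> mpoly2" where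
  "D2B \<alpha> \<beta> v = (let k1 = \<alpha> + v - \<beta>; k2 = \<alpha> - v - \<beta>; k3 = \<alpha> + v + \<beta> + 2; k4 = \<alpha> - v + \<beta> + 2 in
     let b = [:2 * v\<^sup>2 * k3 * k4 * (v\<^sup>2 + (\<alpha> - \<beta>) * (\<alpha> + \<beta> + 4)), - 4 * v ^ 4 * k3 * k4:] in
     mat2 0 b (- b) 0)"

lemma symmetry_equations_D2:
  assumes "\<alpha> + v - \<beta> \<noteq> 0" "\<alpha> - v - \<beta> \<noteq> 0"
  shows "symmetry_equations pearson_S (pearson_sigma \<alpha> \<beta>) (Wpoly \<alpha> \<beta> v)
           (D2F0 \<alpha> \<beta> v) (D2F1 \<alpha> \<beta> v) (D2F2 \<alpha> \<beta> v) (D2A \<alpha> \<beta> v) (D2B \<alpha> \<beta> v)"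
proof -
  obtain c1 c2 where c1: "c1 * (\<alpha> + v - \<beta>) = v * (\<alpha> + v + \<beta> + 2)"
    and c2: "c2 * (\<alpha> - v - \<beta>) = - v * (\<alpha> - v + \<beta> + 2)"
    and W: "Wpoly \<alpha> \<beta> v = mat2 [:\<alpha> + 1, - (\<alpha> + v + \<beta> + 2), c1:]
       [:- (\<alpha> + 1), \<alpha> + \<beta> + 2:] [:- (\<alpha> + 1), \<alpha> + \<beta> + 2:]
       [:\<alpha> + 1, - (\<alpha> - v + \<beta> + 2), c2:]"
    using Wpoly_cases[OF assms] .
  show ?thesis
    unfolding symmetry_equations_def W D2F0_def D2F1_def D2F2_def D2A_def D2B_def Let_def
      pearson_S_def pearson_sigma_def mat2_arith
    apply (simp only: pCons_arith)
    apply (intro conjI)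
    apply (algebra | use c1 c2 in algebra)+
    done
qed

lemma dop2_mderiv_eq_0:
  assumes "mderiv P = 0"
  shows "dop2 F0 F1 F2 P = P ** F0"
proof -
  have "mderiv (mderiv P) = 0"
    using assms by (simp add: mderiv_def vec_eq_iff)
  with assms show ?thesis by (simp add: dop2_def)
qed

lemma mderiv_mat_1: "mderiv (mat 1) = 0"
  by (simp add: mderiv_def mat_def vec_eq_iff)

lemma mderiv_D1F0: "mderiv (D1F0 v) = 0"
  by (simp add: D1F0_def mat2_mderiv pderiv_pCons) (simp add: mat2_def vec_eq_iff)

lemma mderiv_D2F0: "mderiv (D2F0 \<alpha> \<beta> v) = 0"
  by (simp add: D2F0_def Let_def mat2_mderiv pderiv_pCons) (simp add: mat2_def vec_eq_iff)

lemma D1F0_D2F0_not_commute: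
  assumes "v \<noteq> 0" "\<alpha> - v - \<beta> \<noteq> 0" "\<alpha> + v + \<beta> + 2 > 0" "\<alpha> - v + \<beta> + 2 > 0"
  shows "D1F0 v ** D2F0 \<alpha> \<beta> v \<noteq> D2F0 \<alpha> \<beta> v ** D1F0 v"
  using assms
  by (simp add: D1F0_def D2F0_def Let_def mat2_mult mat2_eq_iff add_pos_pos add.assoc)

theorem corollary7p5:
  fixes \<alpha> \<beta> v :: real
  assumes "\<alpha> > -1" and "\<beta> > -1"
    and "\<bar>\<alpha> - \<beta>\<bar> < \<bar>v\<bar>" and "\<bar>v\<bar> < \<alpha> + \<beta> + 2"
  shows "\<exists>D1\<in>DW \<alpha> \<beta> v. \<exists>D2\<in>DW \<alpha> \<beta> v. \<exists>P.
           dact D2 (dact D1 P) \<noteq> dact D1 (dact D2 P)"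
proof -
  note bounds = parameter_bounds[OF assms(3,4)]
  have K: "\<alpha> + v - \<beta> \<noteq> 0" "\<alpha> - v - \<beta> \<noteq> 0"
    using bounds(2) by auto
  have pos_def: "\<And>t x. 0 < t \<Longrightarrow> t < 1 \<Longrightarrow> x \<noteq> 0 \<Longrightarrow> x \<bullet> (Wtil \<alpha> \<beta> v t *v x) > 0"
    using Wtil_pos_def assms(1,3,4) by blast
  let ?D1 = "[D1F0 v, D1F1 \<alpha> \<beta> v, D1F2 v]"
  let ?D2 = "[D2F0 \<alpha> \<beta> v, D2F1 \<alpha> \<beta> v, D2F2 \<alpha> \<beta> v]"
  have "?D1 \<in> DW \<alpha> \<beta> v"
    by (rule symmetric_operator_in_DW[OF assms(1,2) pos_def symmetry_equations_D1[OF K]])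
       (auto simp: mdeg_le_mat2 D1F0_def D1F1_def D1F2_def degree_pCons_eq_if)
  moreover have "?D2 \<in> DW \<alpha> \<beta> v"
    by (rule symmetric_operator_in_DW[OF assms(1,2) pos_def symmetry_equations_D2[OF K]])
       (auto simp: mdeg_le_mat2 D2F0_def D2F1_def D2F2_def Let_def degree_pCons_eq_if)
  moreover have "dact ?D2 (dact ?D1 (mat 1)) = D1F0 v ** D2F0 \<alpha> \<beta> v"
    and "dact ?D1 (dact ?D2 (mat 1)) = D2F0 \<alpha> \<beta> v ** D1F0 v"
    by (simp_all add: dact_eq_dop2 dop2_mderiv_eq_0 mderiv_mat_1 mderiv_D1F0 mderiv_D2F0)
  ultimately show ?thesis
    using D1F0_D2F0_not_commute[OF bounds(1) K(2) bounds(3,4)] by metis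
qed

end
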